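(* Let $G$ be a convergence group. Then $\mathcal B := \{H^{\diamond} : H\subseteq\Gamma G \text{ equicontinuous}\}$ is a zero neighbourhood base of a group topology $\tau$ on $G$ with the following three properties. First, $\tau$ is locally quasi-convex. Second, the identity map from $G$ (with its convergence structure) to $(G,\tau)$ is continuous. Third, $\tau$ is finer than every locally quasi-convex group topology $\mu$ on $G$ for which the identity $G\to(G,\mu)$ is continuous. In other words, $\tau$ is the locally quasi-convex modification $\tau(G)$ of $G$.
   Context: All groups are abelian. A convergence group is an abelian group with a convergence structure (an assignment to each point $x$ of a collection of filters converging to $x$). This assignment must satisfy three conditions: point ultrafilters converge to their point; finite intersections of filters converging to $x$ converge to $x$; and finer filters converge. The group operation must be compatible: $\mathcal F\to x$, $\mathcal G\to y$ imply $\mathcal F-\mathcal G\to x-y$. Topological groups are convergence groups, with convergent filters being those finer than the neighbourhood filter. $\mathbb T=\mathbb R/\mathbb Z$, $\rho:\mathbb R\to\mathbb T$ is the quotient map, and $\mathbb T_+=\rho([-1/4,1/4])$. $\Gamma G$ is the group of continuous homomorphisms $G\to\mathbb T$. A set $M\subseteq\Gamma G$ is equicontinuous if for every filter $\mathcal F\to0$ in $G$, the filter generated by $\{\varphi(x):\varphi\in M,x\in F\}$, $F\in\mathcal F$, converges to $0$ in $\mathbb T$. For $A\subseteq G$ and $H\subseteq\Gamma G$, set $A^{\circ}=\{\varphi\in\Gamma G:\varphi(A)\subseteq\mathbb T_+\}$ and $H^{\diamond}=\{x\in G: \varphi(x)\in\mathbb T_+ \ \forall \varphi\in H\}$. A subset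 $A$ of a topological group $G$ is quasi-convex if for every $x\in G\setminus A$ there is a continuous character $\varphi$ with $\varphi(A)\subseteq\mathbb T_+$ and $\varphi(x)\notin\mathbb T_+$. A topological group is locally quasi-convex if it has a zero neighbourhood base of quasi-convex sets. The locally quasi-convex modification $\tau(G)$ of a convergence group $G$ is the finest locally quasi-convex group topology on $G$ that is coarser than the convergence structure of $G$. *)

theory Defs
  imports "HOL-Analysis.Analysis"
begin

text \<open>The circle group T = R/Z is modelled as the unit circle in the complex plane
  via the isomorphism induced by rho(t) = cis(2 pi t); the group operation of T
  corresponds to complex multiplication and 0 in T corresponds to 1.\<close>

definition rho :: "real \<Rightarrow> complex" where
  "rho t = cis (2 * pi * t)"

definition circT :: "complex set" where
  "circT = range rho"

definition circT_plus :: "complex set" where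
  "circT_plus = rho ` {-1/4..1/4}"

text \<open>Convergence structures on an abelian group (the group is the type 'a).
  conv F x means: the filter F converges to x.\<close>

definition conv_group :: "('a::ab_group_add filter \<Rightarrow> 'a \<Rightarrow> bool) \<Rightarrow> bool" where
  "conv_group conv \<longleftrightarrow>
     (\<forall>x. conv (principal {x}) x) \<and>
     (\<forall>F G x. conv F x \<and> conv G x \<longrightarrow> conv (sup F G) x) \<and>
     (\<forall>F G x. conv F x \<and> G \<le> F \<longrightarrow> conv G x) \<and>
     (\<forall>F G x y. conv F x \<and> conv G y \<longrightarrow>
        conv (filtermap (\<lambda>(a, b). a - b) (F \<times>\<^sub>F G)) (x - y))"

definition is_hom_T :: "('a::ab_group_add \<Rightarrow> complex) \<Rightarrow> bool" where
  "is_hom_T \<phi> \<longleftrightarrow> (\<forall>x. \<phi> x \<in> circT) \<and> (\<forall>x y. \<phi> (x + y) = \<phi> x * \<phi> y)"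

definition char_group :: "('a::ab_group_add filter \<Rightarrow> 'a \<Rightarrow> bool) \<Rightarrow> ('a \<Rightarrow> complex) set" where
  "char_group conv = {\<phi>. is_hom_T \<phi> \<and>
     (\<forall>F x. conv F x \<longrightarrow> filterlim \<phi> (nhds (\<phi> x)) F)}"

definition equicontinuous :: "('a::ab_group_add filter \<Rightarrow> 'a \<Rightarrow> bool) \<Rightarrow> ('a \<Rightarrow> complex) set \<Rightarrow> bool" where
  "equicontinuous conv M \<longleftrightarrow> M \<subseteq> char_group conv \<and>
     (\<forall>F. conv F 0 \<longrightarrow> filtermap (\<lambda>(\<phi>, x). \<phi> x) (principal M \<times>\<^sub>F F) \<le> nhds 1)"

definition polar_dia :: "('a \<Rightarrow> complex) set \<Rightarrow> 'a set" where
  "polar_dia H = {x. \<forall>\<phi>\<in>H. \<phi> x \<in> circT_plus}"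

definition group_topology :: "'a::ab_group_add topology \<Rightarrow> bool" where
  "group_topology \<mu> \<longleftrightarrow> topspace \<mu> = UNIV \<and>
     continuous_map (prod_topology \<mu> \<mu>) \<mu> (\<lambda>(x, y). x - y)"

definition zero_nbhd_base :: "'a::ab_group_add topology \<Rightarrow> 'a set set \<Rightarrow> bool" where
  "zero_nbhd_base \<mu> B \<longleftrightarrow>
     (\<forall>A\<in>B. \<exists>U. openin \<mu> U \<and> 0 \<in> U \<and> U \<subseteq> A) \<and>
     (\<forall>U. openin \<mu> U \<and> 0 \<in> U \<longrightarrow> (\<exists>A\<in>B. A \<subseteq> U))"

definition top_character :: "'a::ab_group_add topology \<Rightarrow> ('a \<Rightarrow> complex) \<Rightarrow> bool" where
  "top_character \<mu> \<phi> \<longleftrightarrow> is_hom_T \<phi> \<and> continuous_map \<mu> euclidean \<phi>"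

definition quasi_convex :: "'a::ab_group_add topology \<Rightarrow> 'a set \<Rightarrow> bool" where
  "quasi_convex \<mu> A \<longleftrightarrow>
     (\<forall>x. x \<notin> A \<longrightarrow> (\<exists>\<phi>. top_character \<mu> \<phi> \<and> \<phi> ` A \<subseteq> circT_plus \<and> \<phi> x \<notin> circT_plus))"

definition locally_quasi_convex :: "'a::ab_group_add topology \<Rightarrow> bool" where
  "locally_quasi_convex \<mu> \<longleftrightarrow> group_topology \<mu> \<and>
     zero_nbhd_base \<mu> {A. quasi_convex \<mu> A \<and> (\<exists>U. openin \<mu> U \<and> 0 \<in> U \<and> U \<subseteq> A)}"

definition id_continuous :: "('a filter \<Rightarrow> 'a \<Rightarrow> bool) \<Rightarrow> 'a topology \<Rightarrow> bool" where
  "id_continuous conv \<mu> \<longleftrightarrow>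
     (\<forall>F x. conv F x \<longrightarrow> (\<forall>U. openin \<mu> U \<and> x \<in> U \<longrightarrow> eventually (\<lambda>y. y \<in> U) F))"

end

theory Submission
  imports Defs
begin

text \<open>
  Write \<open>E\<close> for the equicontinuous sets of characters of the convergence
  group \<open>G\<close>.  The family \<open>E\<close> is closed under finite unions and under adjoining the squares
  \<open>\<phi>\<^sup>2\<close> of its members, and the doubling inequality for the half circle \<open>T\<^sub>+\<close> gives
  \<open>(H \<union> H\<^sup>2)\<^sup>\<diamond> + (H \<union> H\<^sup>2)\<^sup>\<diamond> \<subseteq> H\<^sup>\<diamond>\<close>.  Hence the sets \<open>U\<close> such that every \<open>x \<in> U\<close> has
  \<open>x + H\<^sup>\<diamond> \<subseteq> U\<close> for some \<open>H \<in> E\<close> form a group topology \<open>\<tau>\<close> with zero neighbourhood base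
  \<open>{H\<^sup>\<diamond> | H \<in> E}\<close>.  The analytic heart is: if \<open>z, z^2, z^4, \<dots>, z^(2^n)\<close> all lie in \<open>T\<^sub>+\<close>
  then \<open>|z - 1|\<^sup>2 \<le> 2/2\<^sup>n\<close>.  It shows (i) every continuous character of \<open>G\<close> is
  \<open>\<tau>\<close>-continuous, so each polar \<open>H\<^sup>\<diamond>\<close> is \<open>\<tau>\<close>-quasi-convex and \<open>\<tau>\<close> is locally quasi-convex,
  and (ii) for a locally quasi-convex \<open>\<mu>\<close> coarser than the convergence, the polar
  \<open>A\<^sup>\<circ>\<close> of a quasi-convex \<open>\<mu>\<close>-neighbourhood \<open>A\<close> of zero is equicontinuous with \<open>A\<^sup>\<circ>\<^sup>\<diamond> \<subseteq> A\<close>,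
  so \<open>\<mu> \<subseteq> \<tau>\<close>.  Continuity of the identity \<open>G \<rightarrow> (G, \<tau>)\<close> follows directly from
  equicontinuity.
\<close>

subsection \<open>The circle group and its half circle\<close>

lemma norm_rho [simp]: "norm (rho t) = 1"
  by (simp add: rho_def)

lemma circT_eq: "circT = {z. norm z = 1}"
proof
  show "circT \<subseteq> {z. norm z = 1}" by (auto simp: circT_def)
  show "{z. norm z = 1} \<subseteq> circT"
  proof
    fix z :: complex assume "z \<in> {z. norm z = 1}"
    hence "norm z = 1" "z \<noteq> 0" by auto
    hence "rho (Arg z / (2*pi)) = z" by (simp add: rho_def cis_Arg sgn_div_norm)
    thus "z \<in> circT" unfolding circT_def by (metis rangeI)
  qed
qed

lemma circT_plus_eq: "circT_plus = {z. norm z = 1 \<and> 0 \<le> Re z}"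
proof
  show "circT_plus \<subseteq> {z. norm z = 1 \<and> 0 \<le> Re z}"
  proof
    fix z assume "z \<in> circT_plus"
    then obtain t where t: "-1/4 \<le> t" "t \<le> 1/4" "z = rho t" by (auto simp: circT_plus_def)
    have "pi * (-1/4) \<le> pi * t" "pi * t \<le> pi * (1/4)"
      using t(1,2) pi_gt_zero by (intro mult_left_mono; auto)+
    hence "-(pi/2) \<le> 2*pi*t" "2*pi*t \<le> pi/2" by auto
    hence "0 \<le> cos (2*pi*t)" by (rule cos_ge_zero)
    thus "z \<in> {z. norm z = 1 \<and> 0 \<le> Re z}" using t by (simp add: rho_def)
  qed
  show "{z. norm z = 1 \<and> 0 \<le> Re z} \<subseteq> circT_plus"
  proof
    fix z :: complex assume "z \<in> {z. norm z = 1 \<and> 0 \<le> Re z}"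
    hence z: "norm z = 1" "0 \<le> Re z" by auto
    hence "z \<noteq> 0" by auto
    hence c: "cis (Arg z) = z" using z by (simp add: cis_Arg sgn_div_norm)
    hence cos_nonneg: "0 \<le> cos (Arg z)" using z(2) by (metis cis.sel(1))
    have b: "- pi < Arg z" "Arg z \<le> pi" using Arg_bounded by auto
    have "\<bar>Arg z\<bar> \<le> pi/2"
    proof (rule ccontr)
      assume "\<not> \<bar>Arg z\<bar> \<le> pi/2"
      hence "cos \<bar>Arg z\<bar> < 0" using b by (intro cos_lt_zero_pi) auto
      with cos_nonneg show False by simp
    qed
    hence "Arg z / (2*pi) \<in> {-1/4..1/4}" by (auto simp: field_simps)
    moreover have "rho (Arg z / (2*pi)) = z" using c by (simp add: rho_def)
    ultimately show "z \<in> circT_plus" unfolding circT_plus_def by (metis image_eqI)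
  qed
qed

text \<open>\<open>\<bbbT>\<^sub>+\<close> is symmetric: on the circle the inverse is the conjugate.\<close>

lemma inverse_circT_plus:
  assumes "z \<in> circT_plus" shows "inverse z \<in> circT_plus"
proof -
  have "norm z = 1" using assms by (simp add: circT_plus_eq)
  hence "z * cnj z = 1" using complex_norm_square[of z] by simp
  hence "inverse z = cnj z" by (metis inverse_unique)
  thus ?thesis using assms by (simp add: circT_plus_eq)
qed

text \<open>The sum of two elements lying in the quarter circle \<open>\<rho>([-1/8, 1/8])\<close> (i.e. both they
  and their doubles lie in \<open>\<bbbT>\<^sub>+\<close>) lies in \<open>\<bbbT>\<^sub>+\<close>.\<close>

lemma circT_plus_mult:
  fixes z w :: complex
  assumes "z \<in> circT_plus" "z^2 \<in> circT_plus" "w \<in> circT_plus" "w^2 \<in> circT_plus"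
  shows "z * w \<in> circT_plus"
proof -
  have z: "norm z = 1" "0 \<le> Re z" "(Im z)^2 \<le> (Re z)^2"
    and w: "norm w = 1" "0 \<le> Re w" "(Im w)^2 \<le> (Re w)^2"
    using assms by (auto simp: circT_plus_eq power2_eq_square)
  have "\<bar>Im z\<bar> \<le> Re z" "\<bar>Im w\<bar> \<le> Re w"
    using z w by (metis abs_le_square_iff abs_of_nonneg)+
  hence "\<bar>Im z\<bar> * \<bar>Im w\<bar> \<le> Re z * Re w" by (intro mult_mono) auto
  hence "Im z * Im w \<le> Re z * Re w" by (metis abs_ge_self abs_mult order_trans)
  thus ?thesis using z w by (simp add: circT_plus_eq norm_mult)
qed

lemma one_minus_Re_square:
  fixes z :: complex
  assumes "z \<in> circT_plus"
  shows "1 - Re z \<le> (1 - Re (z^2)) / 2"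
proof -
  have z: "norm z = 1" "0 \<le> Re z" using assms by (auto simp: circT_plus_eq)
  have e: "(Re z)^2 + (Im z)^2 = 1" using z(1) cmod_power2[of z] by simp
  have "Re z * Re z \<le> Re z * 1"
    using z abs_Re_le_cmod[of z] by (intro mult_left_mono) auto
  thus ?thesis using e by (simp add: power2_eq_square field_simps)
qed

lemma one_minus_Re_bound:
  fixes z :: complex
  assumes "\<forall>j\<le>n. z^(2^j) \<in> circT_plus"
  shows "1 - Re z \<le> 1 / 2^n"
  using assms
proof (induction n arbitrary: z)
  case 0
  then show ?case by (simp add: circT_plus_eq)
next
  case (Suc n)
  have "\<forall>j\<le>n. (z^2)^(2^j) \<in> circT_plus"
    using Suc.prems by (auto simp flip: power_mult simp: mult.commute)
  hence "1 - Re (z^2) \<le> 1/2^n" by (rule Suc.IH)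
  moreover have "1 - Re z \<le> (1 - Re (z^2)) / 2"
    using Suc.prems by (intro one_minus_Re_square) (auto dest: spec[of _ 0])
  ultimately show ?case by simp
qed

lemma circT_plus_squares_near_one:
  assumes "0 < \<epsilon>"
  obtains n where "\<And>z::complex. \<forall>j\<le>n. z^(2^j) \<in> circT_plus \<Longrightarrow> norm (z - 1) < \<epsilon>"
proof -
  obtain n :: nat where n: "2 / \<epsilon>^2 < 2^n" using real_arch_pow[of 2 "2/\<epsilon>^2"] by auto
  have "norm (z - 1) < \<epsilon>" if z: "\<forall>j\<le>n. z^(2^j) \<in> circT_plus" for z :: complex
  proof -
    have "norm z = 1" using z by (auto simp: circT_plus_eq dest: spec[of _ 0])
    hence "(norm (z - 1))^2 = 2 * (1 - Re z)"
      using cmod_power2[of z] cmod_power2[of "z - 1"] by (simp add: power2_eq_square algebra_simps)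
    also have "\<dots> \<le> 2 / 2^n" using one_minus_Re_bound[OF z] by simp
    also have "\<dots> < \<epsilon>^2" using n assms by (simp add: field_simps)
    finally show ?thesis using assms by (simp add: power_less_imp_less_base)
  qed
  thus ?thesis using that by blast
qed

lemma hom_norm: "is_hom_T \<phi> \<Longrightarrow> norm (\<phi> x) = 1"
  by (auto simp: is_hom_T_def circT_eq)

lemma hom_add: "is_hom_T \<phi> \<Longrightarrow> \<phi> (x + y) = \<phi> x * \<phi> y"
  by (simp add: is_hom_T_def)

lemma hom_zero:
  assumes "is_hom_T \<phi>" shows "\<phi> 0 = 1"
proof -
  have "\<phi> 0 * \<phi> 0 = \<phi> 0 * 1" using hom_add[OF assms, of 0 0] by simp
  moreover have "\<phi> 0 \<noteq> 0" using hom_norm[OF assms, of 0] by auto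
  ultimately show ?thesis by (metis mult_left_cancel)
qed

lemma hom_uminus:
  assumes "is_hom_T \<phi>" shows "\<phi> (- x) = inverse (\<phi> x)"
proof -
  have "\<phi> x * \<phi> (- x) = 1" using hom_add[OF assms, of x "- x"] hom_zero[OF assms] by simp
  thus ?thesis by (metis inverse_unique)
qed

lemma hom_double_iter:
  assumes "is_hom_T \<phi>" shows "\<phi> (((\<lambda>y. y + y) ^^ j) y) = \<phi> y ^ (2^j)"
proof (induction j)
  case 0
  then show ?case by simp
next
  case (Suc j)
  have "\<phi> (((\<lambda>y. y + y) ^^ Suc j) y) = \<phi> (((\<lambda>y. y + y) ^^ j) y) ^ 2"
    by (simp add: hom_add[OF assms] power2_eq_square)
  also have "\<dots> = \<phi> y ^ (2^Suc j)"
    using Suc by (simp add: power_mult[symmetric] mult.commute)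
  finally show ?case .
qed

lemma char_group_power:
  assumes "\<phi> \<in> char_group conv" shows "(\<lambda>x. \<phi> x ^ k) \<in> char_group conv"
proof -
  have "is_hom_T (\<lambda>x. \<phi> x ^ k)"
    using assms by (auto simp: char_group_def is_hom_T_def circT_eq norm_power power_mult_distrib)
  thus ?thesis
    using assms unfolding char_group_def filterlim_def[symmetric] by (auto intro: tendsto_power)
qed

subsection \<open>Equicontinuous sets of characters\<close>

lemma eventually_prod_principal:
  "eventually (\<lambda>p. P (fst p) (snd p)) (principal M \<times>\<^sub>F F) \<longleftrightarrow>
   eventually (\<lambda>y. \<forall>\<phi>\<in>M. P \<phi> y) F"
proof
  assume "eventually (\<lambda>p. P (fst p) (snd p)) (principal M \<times>\<^sub>F F)"
  then obtain Pf Pg where "eventually Pf (principal M)" "eventually Pg F"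
      "\<forall>x y. Pf x \<longrightarrow> Pg y \<longrightarrow> P x y"
    unfolding eventually_prod_filter by auto
  thus "eventually (\<lambda>y. \<forall>\<phi>\<in>M. P \<phi> y) F"
    by (auto simp: eventually_principal elim: eventually_mono)
next
  assume "eventually (\<lambda>y. \<forall>\<phi>\<in>M. P \<phi> y) F"
  thus "eventually (\<lambda>p. P (fst p) (snd p)) (principal M \<times>\<^sub>F F)"
    unfolding eventually_prod_filter
    by (intro exI[of _ "\<lambda>x. x \<in> M"] exI[of _ "\<lambda>y. \<forall>\<phi>\<in>M. P \<phi> y"])
       (auto simp: eventually_principal)
qed

lemma equicontinuous_iff:
  "equicontinuous conv M \<longleftrightarrow> M \<subseteq> char_group conv \<and>
     (\<forall>F. conv F 0 \<longrightarrow> (\<forall>S. open S \<longrightarrow> 1 \<in> S \<longrightarrow> eventually (\<lambda>y. \<forall>\<phi>\<in>M. \<phi> y \<in> S) F))"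
proof -
  have "filtermap (\<lambda>(\<phi>, x). \<phi> x) (principal M \<times>\<^sub>F F) \<le> nhds 1 \<longleftrightarrow>
        (\<forall>S. open S \<longrightarrow> 1 \<in> S \<longrightarrow> eventually (\<lambda>y. \<forall>\<phi>\<in>M. \<phi> y \<in> S) F)" for F
    unfolding filterlim_def[symmetric] tendsto_def
    using eventually_prod_principal[of "\<lambda>\<phi> y. \<phi> y \<in> _" M F] by (simp add: case_prod_beta)
  thus ?thesis unfolding equicontinuous_def by auto
qed

lemma equicontinuous_hom: "equicontinuous conv H \<Longrightarrow> \<phi> \<in> H \<Longrightarrow> is_hom_T \<phi>"
  by (auto simp: equicontinuous_def char_group_def)

lemma equicontinuous_Un:
  assumes "equicontinuous conv H" "equicontinuous conv K"
  shows "equicontinuous conv (H \<union> K)"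
  unfolding equicontinuous_iff
proof (intro conjI allI impI)
  show "H \<union> K \<subseteq> char_group conv" using assms by (auto simp: equicontinuous_def)
  fix F S assume "conv F 0" "open S" "(1::complex) \<in> S"
  hence "eventually (\<lambda>y. \<forall>\<phi>\<in>H. \<phi> y \<in> S) F" "eventually (\<lambda>y. \<forall>\<phi>\<in>K. \<phi> y \<in> S) F"
    using assms unfolding equicontinuous_iff by blast+
  thus "eventually (\<lambda>y. \<forall>\<phi>\<in>H \<union> K. \<phi> y \<in> S) F" by eventually_elim auto
qed

lemma equicontinuous_finite:
  assumes "finite H" "H \<subseteq> char_group conv"
  shows "equicontinuous conv H"
  unfolding equicontinuous_iff
proof (intro conjI assms allI impI)
  fix F S assume F: "conv F 0" and S: "open S" "(1::complex) \<in> S"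
  have "eventually (\<lambda>y. \<phi> y \<in> S) F" if "\<phi> \<in> H" for \<phi>
  proof -
    have "\<phi> \<in> char_group conv" using that assms by auto
    hence "(\<phi> \<longlongrightarrow> \<phi> 0) F" "\<phi> 0 = 1"
      using F hom_zero by (auto simp: char_group_def filterlim_def)
    thus ?thesis using S by (auto simp: tendsto_def)
  qed
  thus "eventually (\<lambda>y. \<forall>\<phi>\<in>H. \<phi> y \<in> S) F" using assms(1) by (simp add: eventually_ball_finite)
qed

text \<open>Adjoining to \<open>H\<close> the squares of its members; this is how polars get halved.\<close>

definition add_squares :: "('a \<Rightarrow> complex) set \<Rightarrow> ('a \<Rightarrow> complex) set" where
  "add_squares H = H \<union> (\<lambda>\<phi> x. \<phi> x ^ 2) ` H"

lemma equicontinuous_add_squares: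
  assumes "equicontinuous conv H" shows "equicontinuous conv (add_squares H)"
proof -
  have "equicontinuous conv ((\<lambda>\<phi> x. \<phi> x ^ 2) ` H)"
    unfolding equicontinuous_iff
  proof (intro conjI allI impI)
    show "(\<lambda>\<phi> x. \<phi> x ^ 2) ` H \<subseteq> char_group conv"
      using assms char_group_power unfolding equicontinuous_def by blast
    fix F S assume F: "conv F 0" and S: "open S" "(1::complex) \<in> S"
    have H: "\<And>S. open S \<Longrightarrow> 1 \<in> S \<Longrightarrow> eventually (\<lambda>y. \<forall>\<phi>\<in>H. \<phi> y \<in> S) F"
      using assms F unfolding equicontinuous_iff by blast
    have "open ((\<lambda>z::complex. z^2) -` S)" using S by (intro open_vimage continuous_intros)
    hence "eventually (\<lambda>y. \<forall>\<phi>\<in>H. \<phi> y \<in> (\<lambda>z::complex. z^2) -` S) F"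
      using S(2) by (intro H) auto
    thus "eventually (\<lambda>y. \<forall>\<phi>\<in>(\<lambda>\<phi> x. \<phi> x ^ 2) ` H. \<phi> y \<in> S) F"
      by (auto elim: eventually_mono)
  qed
  thus ?thesis unfolding add_squares_def using assms by (rule equicontinuous_Un[rotated])
qed

text \<open>Polars of equicontinuous sets contain \<open>0\<close>, are symmetric, and behave like balls under
  addition, with \<open>add_squares\<close> playing the role of halving the radius.\<close>

lemma polar_dia_Un: "polar_dia (H \<union> K) = polar_dia H \<inter> polar_dia K"
  by (auto simp: polar_dia_def)

lemma zero_in_polar_dia: "equicontinuous conv H \<Longrightarrow> 0 \<in> polar_dia H"
  by (auto simp: polar_dia_def circT_plus_eq hom_zero dest: equicontinuous_hom)

lemma uminus_in_polar_dia:
  assumes "equicontinuous conv H" "x \<in> polar_dia H" shows "- x \<in> polar_dia H"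
  using assms inverse_circT_plus by (auto simp: polar_dia_def hom_uminus dest: equicontinuous_hom)

lemma add_in_polar_dia:
  assumes "equicontinuous conv H" "x \<in> polar_dia (add_squares H)" "y \<in> polar_dia (add_squares H)"
  shows "x + y \<in> polar_dia H"
  unfolding polar_dia_def
proof (intro CollectI ballI)
  fix \<phi> assume "\<phi> \<in> H"
  hence "\<phi> x * \<phi> y \<in> circT_plus"
    using assms(2,3) by (intro circT_plus_mult) (auto simp: polar_dia_def add_squares_def)
  moreover have "\<phi> (x + y) = \<phi> x * \<phi> y"
    using hom_add equicontinuous_hom[OF assms(1) \<open>\<phi> \<in> H\<close>] by blast
  ultimately show "\<phi> (x + y) \<in> circT_plus" by simp
qed

subsection \<open>The topology generated by the polars\<close>

definition polar_open :: "('a::ab_group_add filter \<Rightarrow> 'a \<Rightarrow> bool) \<Rightarrow> 'a set \<Rightarrow> bool" where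
  "polar_open conv U \<longleftrightarrow>
     (\<forall>x\<in>U. \<exists>H. equicontinuous conv H \<and> (\<forall>y\<in>polar_dia H. x + y \<in> U))"

lemma istopology_polar_open: "istopology (polar_open conv)"
  unfolding istopology_def
proof (intro conjI allI impI)
  fix S T assume S: "polar_open conv S" and T: "polar_open conv T"
  show "polar_open conv (S \<inter> T)" unfolding polar_open_def
  proof
    fix x assume "x \<in> S \<inter> T"
    then obtain H K where "equicontinuous conv H" "\<forall>y\<in>polar_dia H. x + y \<in> S"
        "equicontinuous conv K" "\<forall>y\<in>polar_dia K. x + y \<in> T"
      using S T unfolding polar_open_def by blast
    thus "\<exists>H. equicontinuous conv H \<and> (\<forall>y\<in>polar_dia H. x + y \<in> S \<inter> T)"
      by (intro exI[of _ "H \<union> K"] conjI equicontinuous_Un) (auto simp: polar_dia_Un)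
  qed
next
  fix \<K> assume opens: "\<forall>K\<in>\<K>. polar_open conv K"
  show "polar_open conv (\<Union>\<K>)" unfolding polar_open_def
  proof
    fix x assume "x \<in> \<Union>\<K>"
    then obtain K where K: "K \<in> \<K>" "x \<in> K" by blast
    then obtain H where "equicontinuous conv H" "\<forall>y\<in>polar_dia H. x + y \<in> K"
      using opens unfolding polar_open_def by blast
    thus "\<exists>H. equicontinuous conv H \<and> (\<forall>y\<in>polar_dia H. x + y \<in> \<Union>\<K>)" using K by blast
  qed
qed

definition polar_topology :: "('a::ab_group_add filter \<Rightarrow> 'a \<Rightarrow> bool) \<Rightarrow> 'a topology" where
  "polar_topology conv = topology (polar_open conv)"

lemma openin_polar_topology: "openin (polar_topology conv) = polar_open conv"
  unfolding polar_topology_def by (rule topology_inverse'[OF istopology_polar_open])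

lemma topspace_polar_topology: "topspace (polar_topology conv) = UNIV"
proof -
  have "equicontinuous conv {}" by (rule equicontinuous_finite) auto
  hence "polar_open conv UNIV" unfolding polar_open_def by blast
  thus ?thesis unfolding topspace_def openin_polar_topology by blast
qed

lemma openin_polar_topology_polar:
  assumes "openin (polar_topology conv) U" "x \<in> U"
  obtains H where "equicontinuous conv H" "\<And>y. y \<in> polar_dia H \<Longrightarrow> x + y \<in> U"
  using assms unfolding openin_polar_topology polar_open_def by blast

definition polar_interior :: "('a::ab_group_add filter \<Rightarrow> 'a \<Rightarrow> bool) \<Rightarrow> 'a set \<Rightarrow> 'a set" where
  "polar_interior conv S = {z. \<exists>K. equicontinuous conv K \<and> (\<forall>w\<in>polar_dia K. z + w \<in> S)}"

lemma openin_polar_interior: "openin (polar_topology conv) (polar_interior conv S)"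
  unfolding openin_polar_topology polar_open_def
proof
  fix z assume "z \<in> polar_interior conv S"
  then obtain K where K: "equicontinuous conv K" "\<And>w. w \<in> polar_dia K \<Longrightarrow> z + w \<in> S"
    unfolding polar_interior_def by auto
  have "z + y \<in> polar_interior conv S" if y: "y \<in> polar_dia (add_squares K)" for y
  proof -
    have "z + y + w \<in> S" if w: "w \<in> polar_dia (add_squares K)" for w
      using K(2)[OF add_in_polar_dia[OF K(1) y w]] by (simp add: add.assoc)
    thus ?thesis unfolding polar_interior_def using equicontinuous_add_squares[OF K(1)] by blast
  qed
  thus "\<exists>H. equicontinuous conv H \<and> (\<forall>y\<in>polar_dia H. z + y \<in> polar_interior conv S)"
    using equicontinuous_add_squares[OF K(1)] by blast
qed

lemma polar_interior_subset: "polar_interior conv S \<subseteq> S"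
  unfolding polar_interior_def using zero_in_polar_dia by fastforce

text \<open>Subtraction is continuous: if \<open>x - y + H\<^sup>\<diamond> \<subseteq> U\<close>, then the interiors of
  \<open>x + (add_squares H)\<^sup>\<diamond>\<close> and \<open>y + (add_squares H)\<^sup>\<diamond>\<close> are mapped into \<open>U\<close>.\<close>

lemma openin_diff_preimage:
  assumes "openin (polar_topology conv) U"
  shows "openin (prod_topology (polar_topology conv) (polar_topology conv)) {p. fst p - snd p \<in> U}"
  unfolding openin_prod_topology_alt
proof (intro allI impI)
  fix x y assume "(x, y) \<in> {p. fst p - snd p \<in> U}"
  then obtain H where H: "equicontinuous conv H" "\<And>w. w \<in> polar_dia H \<Longrightarrow> x - y + w \<in> U"
    using openin_polar_topology_polar[OF assms] by auto
  define K where "K = add_squares H"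
  have K: "equicontinuous conv K" using equicontinuous_add_squares[OF H(1)] K_def by simp
  define V where "V a = polar_interior conv {b. b - a \<in> polar_dia K}" for a
  have V: "openin (polar_topology conv) (V a)" "a \<in> V a" for a
    unfolding V_def using K by (auto simp only: openin_polar_interior) (auto simp: polar_interior_def)
  have "a - b \<in> U" if "a \<in> V x" "b \<in> V y" for a b
  proof -
    have ax: "a - x \<in> polar_dia K" and yb: "b - y \<in> polar_dia K"
      using that polar_interior_subset unfolding V_def by auto
    have "(a - x) + - (b - y) \<in> polar_dia H"
      using add_in_polar_dia[OF H(1) ax[unfolded K_def] uminus_in_polar_dia[OF K yb, unfolded K_def]] .
    hence "x - y + ((a - x) + - (b - y)) \<in> U" by (rule H(2))
    thus ?thesis by (simp add: algebra_simps)
  qed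
  hence "V x \<times> V y \<subseteq> {p. fst p - snd p \<in> U}" by auto
  thus "\<exists>U' V'. openin (polar_topology conv) U' \<and> openin (polar_topology conv) V' \<and>
      x \<in> U' \<and> y \<in> V' \<and> U' \<times> V' \<subseteq> {p. fst p - snd p \<in> U}"
    by (intro exI[of _ "V x"] exI[of _ "V y"] conjI V)
qed

lemma group_topology_polar_topology: "group_topology (polar_topology conv)"
  unfolding group_topology_def continuous_map_def
proof (intro conjI topspace_polar_topology allI impI)
  let ?\<tau> = "polar_topology conv"
  fix U assume "openin ?\<tau> U"
  moreover have "{p \<in> topspace (prod_topology ?\<tau> ?\<tau>). (\<lambda>(x, y). x - y) p \<in> U} =
      {p. fst p - snd p \<in> U}"
    by (auto simp: topspace_polar_topology)
  ultimately show "openin (prod_topology ?\<tau> ?\<tau>)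
      {p \<in> topspace (prod_topology ?\<tau> ?\<tau>). (\<lambda>(x, y). x - y) p \<in> U}"
    using openin_diff_preimage by simp
qed (simp add: topspace_polar_topology)

lemma polar_dia_nbhd:
  assumes "equicontinuous conv H"
  shows "\<exists>U. openin (polar_topology conv) U \<and> 0 \<in> U \<and> U \<subseteq> polar_dia H"
proof -
  have "0 \<in> polar_interior conv (polar_dia H)"
    using assms unfolding polar_interior_def by force
  thus ?thesis
    using openin_polar_interior polar_interior_subset[of conv "polar_dia H"] by blast
qed

lemma zero_nbhd_base_polar_topology:
  "zero_nbhd_base (polar_topology conv) {polar_dia H | H. equicontinuous conv H}"
  unfolding zero_nbhd_base_def
proof (intro conjI ballI allI impI)
  fix A assume "A \<in> {polar_dia H | H. equicontinuous conv H}"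
  thus "\<exists>U. openin (polar_topology conv) U \<and> 0 \<in> U \<and> U \<subseteq> A" using polar_dia_nbhd by blast
next
  fix U assume "openin (polar_topology conv) U \<and> 0 \<in> U"
  then obtain H where "equicontinuous conv H" "\<And>y. y \<in> polar_dia H \<Longrightarrow> 0 + y \<in> U"
    using openin_polar_topology_polar by blast
  thus "\<exists>A\<in>{polar_dia H | H. equicontinuous conv H}. A \<subseteq> U" by auto
qed

text \<open>Every continuous character of the convergence group is continuous for the polar
  topology: for \<open>\<phi>(x) \<in> S\<close> open, the finite equicontinuous set \<open>{\<phi>^(2^j) | j \<le> n}\<close>
  has a polar on which \<open>\<phi>\<close> stays close to \<open>1\<close>.\<close>

lemma top_character_polar_topology:
  assumes "\<phi> \<in> char_group conv"
  shows "top_character (polar_topology conv) \<phi>"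
  unfolding top_character_def continuous_map_def
proof (intro conjI allI impI)
  have h: "is_hom_T \<phi>" using assms by (simp add: char_group_def)
  show "is_hom_T \<phi>" by (fact h)
  show "\<phi> \<in> topspace (polar_topology conv) \<rightarrow> topspace euclidean" by simp
  fix S :: "complex set" assume "openin euclidean S"
  hence S: "open S" by (simp only: open_openin)
  have "polar_open conv {x. \<phi> x \<in> S}" unfolding polar_open_def
  proof
    fix x assume "x \<in> {x. \<phi> x \<in> S}"
    then obtain \<epsilon> where e: "0 < \<epsilon>" "ball (\<phi> x) \<epsilon> \<subseteq> S" using S open_contains_ball by blast
    obtain n where n: "\<And>z. \<forall>j\<le>n. z^(2^j) \<in> circT_plus \<Longrightarrow> norm (z - 1) < \<epsilon>"
      using circT_plus_squares_near_one[OF e(1)] by metis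
    define K where "K = (\<lambda>j y. \<phi> y ^ (2^j)) ` {..n}"
    have K: "equicontinuous conv K" unfolding K_def
      by (rule equicontinuous_finite) (use char_group_power[OF assms] in auto)
    have "x + w \<in> {x. \<phi> x \<in> S}" if w: "w \<in> polar_dia K" for w
    proof -
      have "\<forall>j\<le>n. \<phi> w ^ (2^j) \<in> circT_plus" using w unfolding polar_dia_def K_def by auto
      hence "norm (\<phi> w - 1) < \<epsilon>" by (rule n)
      moreover have "dist (\<phi> x) (\<phi> (x + w)) = norm (\<phi> x) * norm (1 - \<phi> w)"
        by (simp add: hom_add[OF h] dist_norm norm_mult[symmetric] algebra_simps)
      ultimately have "\<phi> (x + w) \<in> ball (\<phi> x) \<epsilon>"
        using hom_norm[OF h, of x] by (simp add: norm_minus_commute)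
      thus ?thesis using e(2) by auto
    qed
    thus "\<exists>H. equicontinuous conv H \<and> (\<forall>y\<in>polar_dia H. x + y \<in> {x. \<phi> x \<in> S})" using K by blast
  qed
  thus "openin (polar_topology conv) {x \<in> topspace (polar_topology conv). \<phi> x \<in> S}"
    by (simp add: openin_polar_topology topspace_polar_topology)
qed

lemma quasi_convex_polar_dia:
  assumes "equicontinuous conv H"
  shows "quasi_convex (polar_topology conv) (polar_dia H)"
  unfolding quasi_convex_def
proof (intro allI impI)
  fix x assume "x \<notin> polar_dia H"
  then obtain \<phi> where \<phi>: "\<phi> \<in> H" "\<phi> x \<notin> circT_plus" unfolding polar_dia_def by auto
  have "top_character (polar_topology conv) \<phi>"
    using \<phi>(1) assms top_character_polar_topology unfolding equicontinuous_def by blast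
  moreover have "\<phi> ` polar_dia H \<subseteq> circT_plus" using \<phi>(1) unfolding polar_dia_def by auto
  ultimately show "\<exists>\<phi>. top_character (polar_topology conv) \<phi> \<and> \<phi> ` polar_dia H \<subseteq> circT_plus \<and>
      \<phi> x \<notin> circT_plus"
    using \<phi>(2) by blast
qed

lemma locally_quasi_convex_polar_topology: "locally_quasi_convex (polar_topology conv)"
  unfolding locally_quasi_convex_def zero_nbhd_base_def
proof (intro conjI group_topology_polar_topology ballI allI impI)
  let ?\<tau> = "polar_topology conv"
  fix A assume "A \<in> {A. quasi_convex ?\<tau> A \<and> (\<exists>U. openin ?\<tau> U \<and> 0 \<in> U \<and> U \<subseteq> A)}"
  thus "\<exists>U. openin ?\<tau> U \<and> 0 \<in> U \<and> U \<subseteq> A" by blast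
next
  let ?\<tau> = "polar_topology conv"
  fix U assume "openin ?\<tau> U \<and> 0 \<in> U"
  then obtain H where H: "equicontinuous conv H" "\<And>y. y \<in> polar_dia H \<Longrightarrow> 0 + y \<in> U"
    using openin_polar_topology_polar by blast
  hence "polar_dia H \<in> {A. quasi_convex ?\<tau> A \<and> (\<exists>U. openin ?\<tau> U \<and> 0 \<in> U \<and> U \<subseteq> A)}"
    using quasi_convex_polar_dia polar_dia_nbhd by blast
  moreover have "polar_dia H \<subseteq> U" using H(2) by auto
  ultimately show "\<exists>A\<in>{A. quasi_convex ?\<tau> A \<and> (\<exists>U. openin ?\<tau> U \<and> 0 \<in> U \<and> U \<subseteq> A)}. A \<subseteq> U"
    by blast
qed

lemma conv_group_translate_to_zero:
  assumes "conv_group conv" "conv F x"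
  shows "conv (filtermap (\<lambda>y. y - x) F) 0"
proof -
  have "conv (principal {x}) x" using assms(1) unfolding conv_group_def by blast
  hence "conv (filtermap (\<lambda>(a, b). a - b) (F \<times>\<^sub>F principal {x})) (x - x)"
    using assms unfolding conv_group_def by blast
  thus ?thesis by (simp add: prod_filter_principal_singleton2 filtermap_filtermap)
qed

text \<open>The identity from the convergence group to the polar topology is continuous: if
  \<open>F \<rightarrow> x\<close> then \<open>F - x \<rightarrow> 0\<close>, so eventually every \<open>\<phi> \<in> H\<close> maps \<open>y - x\<close> into the open
  half plane \<open>Re > 0\<close>, i.e. \<open>y \<in> x + H\<^sup>\<diamond>\<close>.\<close>

lemma id_continuous_polar_topology:
  assumes "conv_group conv"
  shows "id_continuous conv (polar_topology conv)"
  unfolding id_continuous_def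
proof (intro allI impI)
  fix F x U assume F: "conv F x" and U: "openin (polar_topology conv) U \<and> x \<in> U"
  then obtain H where H: "equicontinuous conv H" "\<And>y. y \<in> polar_dia H \<Longrightarrow> x + y \<in> U"
    using openin_polar_topology_polar by blast
  have "eventually (\<lambda>y. \<forall>\<phi>\<in>H. \<phi> y \<in> {z. 0 < Re z}) (filtermap (\<lambda>y. y - x) F)"
    using H(1) conv_group_translate_to_zero[OF assms F] open_halfspace_Re_gt[of 0]
    unfolding equicontinuous_iff by force
  hence "eventually (\<lambda>y. y - x \<in> polar_dia H) F"
    unfolding eventually_filtermap
    by (rule eventually_mono)
       (auto simp: polar_dia_def circT_plus_eq intro: hom_norm equicontinuous_hom[OF H(1)])
  thus "eventually (\<lambda>y. y \<in> U) F"
    by (rule eventually_mono) (use H(2) in force)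
qed

subsection \<open>Maximality among locally quasi-convex topologies\<close>

lemma group_topology_continuous_map_diff:
  assumes "group_topology \<mu>" "continuous_map X \<mu> f" "continuous_map X \<mu> g"
  shows "continuous_map X \<mu> (\<lambda>z. f z - g z)"
proof -
  have "continuous_map X \<mu> ((\<lambda>(x, y). x - y) \<circ> (\<lambda>z. (f z, g z)))"
    using assms unfolding group_topology_def
    by (intro continuous_map_compose[of _ "prod_topology \<mu> \<mu>"] continuous_map_pairedI) auto
  thus ?thesis by (simp add: o_def)
qed

lemma group_topology_continuous_map_const:
  "group_topology \<mu> \<Longrightarrow> continuous_map X \<mu> (\<lambda>z. c)"
  by (simp add: group_topology_def)

lemma group_topology_openin_preimage:
  assumes "group_topology \<mu>" "continuous_map \<mu> \<mu> f" "openin \<mu> U"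
  shows "openin \<mu> {z. f z \<in> U}"
  using openin_continuous_map_preimage[OF assms(2,3)] assms(1) by (simp add: group_topology_def)

lemma group_topology_openin_translate:
  assumes "group_topology \<mu>" "openin \<mu> U"
  shows "openin \<mu> {z. x + z \<in> U}"
proof -
  have "continuous_map \<mu> \<mu> (\<lambda>z. z - (- x))"
    by (intro group_topology_continuous_map_diff group_topology_continuous_map_const assms(1)
        continuous_map_id[unfolded id_def])
  thus ?thesis using group_topology_openin_preimage[OF assms(1) _ assms(2)] by (simp add: add.commute)
qed

lemma group_topology_continuous_double_iter:
  assumes "group_topology \<mu>"
  shows "continuous_map \<mu> \<mu> ((\<lambda>y. y + y) ^^ j)"
proof (induction j)
  case 0
  then show ?case by (simp add: continuous_map_id)
next
  case (Suc j)
  have "continuous_map \<mu> \<mu> (\<lambda>z. z - (0 - z))"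
    by (intro group_topology_continuous_map_diff group_topology_continuous_map_const assms
        continuous_map_id[unfolded id_def])
  hence "continuous_map \<mu> \<mu> (\<lambda>y. y + y)" by simp
  thus ?case unfolding funpow.simps(2) by (rule continuous_map_compose[OF Suc])
qed

lemma doubling_nbhd:
  fixes W :: "'a::ab_group_add set"
  assumes "group_topology \<mu>" "openin \<mu> W" "0 \<in> W"
  obtains V where "openin \<mu> V" "0 \<in> V" "\<And>y j. y \<in> V \<Longrightarrow> j \<le> n \<Longrightarrow> ((\<lambda>y. y + y) ^^ j) y \<in> W"
proof -
  let ?V = "\<Inter>j\<in>{..n}. {y. ((\<lambda>y. y + y) ^^ j) y \<in> W}"
  have "openin \<mu> ?V"
    using assms by (intro openin_INT2 group_topology_openin_preimage
        group_topology_continuous_double_iter) auto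
  moreover have "((\<lambda>y. y + y) ^^ j) 0 = (0::'a)" for j by (induction j) auto
  hence "0 \<in> ?V" using assms(3) by simp
  ultimately show ?thesis using that by blast
qed

lemma id_continuous_eventually:
  "id_continuous conv \<mu> \<Longrightarrow> conv F x \<Longrightarrow> openin \<mu> U \<Longrightarrow> x \<in> U \<Longrightarrow> eventually (\<lambda>y. y \<in> U) F"
  unfolding id_continuous_def by blast

lemma top_character_char_group:
  assumes "group_topology \<mu>" "id_continuous conv \<mu>" "top_character \<mu> \<phi>"
  shows "\<phi> \<in> char_group conv"
proof -
  have "filterlim \<phi> (nhds (\<phi> y)) F" if F: "conv F y" for F y
    unfolding filterlim_def[symmetric] tendsto_def
  proof (intro allI impI)
    fix S :: "complex set" assume S: "open S" "\<phi> y \<in> S"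
    have "openin \<mu> {z. \<phi> z \<in> S}"
      using assms(1,3) S(1) openin_continuous_map_preimage[of \<mu> euclidean \<phi> S]
      by (simp add: top_character_def group_topology_def)
    from id_continuous_eventually[OF assms(2) F this] S(2)
    show "eventually (\<lambda>z. \<phi> z \<in> S) F" by simp
  qed
  thus ?thesis using assms(3) unfolding char_group_def top_character_def by simp
qed

text \<open>The polar \<open>A\<^sup>\<circ>\<close> (within the \<open>\<mu>\<close>-continuous characters) of a \<open>\<mu>\<close>-neighbourhood \<open>A\<close>
  of zero is equicontinuous: if \<open>V\<close> is as in \<open>doubling_nbhd\<close>, every \<open>\<phi> \<in> A\<^sup>\<circ>\<close> maps \<open>V\<close>
  into an \<open>\<epsilon>\<close>-ball around \<open>1\<close>, and convergent filters are eventually in \<open>V\<close>.\<close>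

lemma equicontinuous_top_polar:
  assumes "group_topology \<mu>" "id_continuous conv \<mu>" "openin \<mu> W" "0 \<in> W" "W \<subseteq> A"
  shows "equicontinuous conv {\<phi>. top_character \<mu> \<phi> \<and> \<phi> ` A \<subseteq> circT_plus}"
    (is "equicontinuous conv ?H")
  unfolding equicontinuous_iff
proof (intro conjI allI impI)
  show "?H \<subseteq> char_group conv" using top_character_char_group[OF assms(1,2)] by auto
  fix F S assume F: "conv F 0" and S: "open S" "(1::complex) \<in> S"
  obtain \<epsilon> where e: "0 < \<epsilon>" "ball 1 \<epsilon> \<subseteq> S"
    using open_contains_ball_eq[OF S(1)] S(2) by blast
  obtain n where n: "\<And>z. \<forall>j\<le>n. z^(2^j) \<in> circT_plus \<Longrightarrow> norm (z - 1) < \<epsilon>"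
    using circT_plus_squares_near_one[OF e(1)] by metis
  obtain V where V: "openin \<mu> V" "0 \<in> V" "\<And>y j. y \<in> V \<Longrightarrow> j \<le> n \<Longrightarrow> ((\<lambda>y. y + y) ^^ j) y \<in> W"
    using doubling_nbhd[OF assms(1,3,4), where n = n] by metis
  have "\<phi> y \<in> S" if y: "y \<in> V" and \<phi>: "\<phi> \<in> ?H" for y \<phi>
  proof -
    have h: "is_hom_T \<phi>" and \<phi>A: "\<phi> ` A \<subseteq> circT_plus" using \<phi> by (auto simp: top_character_def)
    have "\<phi> y ^ (2^j) \<in> circT_plus" if "j \<le> n" for j
    proof -
      have "((\<lambda>y. y + y) ^^ j) y \<in> A" using V(3)[OF y that] assms(5) by blast
      hence "\<phi> (((\<lambda>y. y + y) ^^ j) y) \<in> circT_plus" using \<phi>A by blast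
      thus ?thesis by (simp only: hom_double_iter[OF h])
    qed
    hence "norm (\<phi> y - 1) < \<epsilon>" by (intro n) blast
    hence "\<phi> y \<in> ball 1 \<epsilon>" by (simp add: dist_norm norm_minus_commute)
    thus ?thesis using e(2) by blast
  qed
  moreover have "eventually (\<lambda>y. y \<in> V) F" by (rule id_continuous_eventually[OF assms(2) F V(1,2)])
  ultimately show "eventually (\<lambda>y. \<forall>\<phi>\<in>?H. \<phi> y \<in> S) F" by (simp add: eventually_mono)
qed

lemma quasi_convex_bipolar_subset:
  assumes "quasi_convex \<mu> A"
  shows "polar_dia {\<phi>. top_character \<mu> \<phi> \<and> \<phi> ` A \<subseteq> circT_plus} \<subseteq> A"
proof
  fix y assume y: "y \<in> polar_dia {\<phi>. top_character \<mu> \<phi> \<and> \<phi> ` A \<subseteq> circT_plus}"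
  show "y \<in> A"
  proof (rule ccontr)
    assume "y \<notin> A"
    then obtain \<phi> where "top_character \<mu> \<phi>" "\<phi> ` A \<subseteq> circT_plus" "\<phi> y \<notin> circT_plus"
      using assms unfolding quasi_convex_def by blast
    thus False using y unfolding polar_dia_def by blast
  qed
qed

text \<open>Maximality: a \<open>\<mu>\<close>-open \<open>U \<ni> x\<close> contains \<open>x + A\<close> for a quasi-convex zero neighbourhood
  \<open>A\<close>, and \<open>A\<close> contains the polar of the equicontinuous set \<open>A\<^sup>\<circ>\<close>.\<close>

lemma polar_topology_finest:
  assumes "locally_quasi_convex \<mu>" "id_continuous conv \<mu>" "openin \<mu> U"
  shows "openin (polar_topology conv) U"
  unfolding openin_polar_topology polar_open_def
proof
  fix x assume "x \<in> U"
  have gt: "group_topology \<mu>" using assms(1) by (simp add: locally_quasi_convex_def)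
  have "openin \<mu> {z. x + z \<in> U}" "0 \<in> {z. x + z \<in> U}"
    using group_topology_openin_translate[OF gt assms(3)] \<open>x \<in> U\<close> by auto
  moreover have "zero_nbhd_base \<mu> {A. quasi_convex \<mu> A \<and> (\<exists>W. openin \<mu> W \<and> 0 \<in> W \<and> W \<subseteq> A)}"
    using assms(1) by (simp add: locally_quasi_convex_def)
  ultimately obtain A where
      "A \<in> {A. quasi_convex \<mu> A \<and> (\<exists>W. openin \<mu> W \<and> 0 \<in> W \<and> W \<subseteq> A)}" "A \<subseteq> {z. x + z \<in> U}"
    unfolding zero_nbhd_base_def by meson
  then obtain W where A: "quasi_convex \<mu> A" "openin \<mu> W" "0 \<in> W" "W \<subseteq> A"
      "A \<subseteq> {z. x + z \<in> U}"
    by blast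
  let ?H = "{\<phi>. top_character \<mu> \<phi> \<and> \<phi> ` A \<subseteq> circT_plus}"
  have "equicontinuous conv ?H" by (rule equicontinuous_top_polar[OF gt assms(2) A(2-4)])
  moreover have "\<forall>y\<in>polar_dia ?H. x + y \<in> U" using quasi_convex_bipolar_subset[OF A(1)] A(5) by blast
  ultimately show "\<exists>H. equicontinuous conv H \<and> (\<forall>y\<in>polar_dia H. x + y \<in> U)" by blast
qed

theorem theorem2p10:
  fixes conv :: "'a::ab_group_add filter \<Rightarrow> 'a \<Rightarrow> bool"
  assumes "conv_group conv"
  shows "\<exists>\<tau>. group_topology \<tau> \<and>
     zero_nbhd_base \<tau> {polar_dia H | H. H \<subseteq> char_group conv \<and> equicontinuous conv H} \<and>
     locally_quasi_convex \<tau> \<and>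
     id_continuous conv \<tau> \<and>
     (\<forall>\<mu>. group_topology \<mu> \<and> locally_quasi_convex \<mu> \<and> id_continuous conv \<mu> \<longrightarrow>
          (\<forall>U. openin \<mu> U \<longrightarrow> openin \<tau> U))"
proof (intro exI[of _ "polar_topology conv"] conjI allI impI)
  have "{polar_dia H | H. H \<subseteq> char_group conv \<and> equicontinuous conv H} =
        {polar_dia H | H. equicontinuous conv H}"
    by (auto simp: equicontinuous_def)
  thus "zero_nbhd_base (polar_topology conv)
      {polar_dia H | H. H \<subseteq> char_group conv \<and> equicontinuous conv H}"
    using zero_nbhd_base_polar_topology by simp
  show "group_topology (polar_topology conv)" by (rule group_topology_polar_topology)
  show "locally_quasi_convex (polar_topology conv)" by (rule locally_quasi_convex_polar_topology)
  show "id_continuous conv (polar_topology conv)" by (rule id_continuous_polar_topology[OF assms])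
  fix \<mu> U assume "group_topology \<mu> \<and> locally_quasi_convex \<mu> \<and> id_continuous conv \<mu>" "openin \<mu> U"
  thus "openin (polar_topology conv) U" using polar_topology_finest[of \<mu> conv U] by blast
qed

end
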